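(* Let $G$ be a connected graph of order $n\geq 2$ and let $H$ be a graph with $k\geq 1$ connected components $H_1,\dots,H_k$. Let $c$ be a locating coloring of $G\odot H$. Then for every $u\in V(G)$ and every $t\in\{1,\dots,k\}$, the vertices of $H_t(u)$ receive at least $\chi_L(H_t+K_1)-1$ distinct colors under $c$, i.e. $H_t(u)$ meets at least $\chi_L(H_t+K_1)-1$ color classes of $c$.
   Context: All graphs are finite and simple. A $k$-coloring of a connected graph $G$ is a map $c:V(G)\to\{1,\dots,k\}$ with $c(u)\neq c(v)$ for adjacent $u,v$; it induces the partition $\Pi=\{C_1,\dots,C_k\}$ into color classes $C_i=c^{-1}(i)$. The color code of $v$ is $c_\Pi(v)=(d(v,C_1),\dots,d(v,C_k))$ with $d(v,C_i)=\min\{d(v,x): x\in C_i\}$ (graph distance). $c$ is a locating coloring if distinct vertices have distinct color codes; the locating-chromatic number $\chi_L(G)$ is the least $k$ for which a locating $k$-coloring exists. The corona product $G\odot H$ of a graph $G$ with vertex set $\{a_1,\dots,a_n\}$ and a graph $H$ is obtained from one copy of $G$ and $n$ disjoint copies of $H$ by joining $a_i$ to every vertex of the $i$-th copy of $H$. Write $(u)$ for the vertex of $G\odot H$ corresponding to $u\in V(G)$ and $(u,v)$, $v\in V(H)$, for the vertices of the copy of $H$ attached to $(u)$; $H(u)=\{(u,v):v\in V(H)\}$ and $H_t(u)=\{(u,v): v\in V(H_t)\}$. For a graph $F$, $F+K_1$ denotes the join of $F$ with a single new vertex adjacent to all vertices of $F$. *)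

theory Defs
  imports Main
begin

definition graph :: "'a set \<Rightarrow> ('a \<Rightarrow> 'a \<Rightarrow> bool) \<Rightarrow> bool" where
  "graph V E \<longleftrightarrow> finite V \<and> (\<forall>x y. E x y \<longrightarrow> x \<in> V \<and> y \<in> V)
     \<and> (\<forall>x y. E x y \<longrightarrow> E y x) \<and> (\<forall>x. \<not> E x x)"

definition connected_graph :: "'a set \<Rightarrow> ('a \<Rightarrow> 'a \<Rightarrow> bool) \<Rightarrow> bool" where
  "connected_graph V E \<longleftrightarrow> graph V E \<and> V \<noteq> {} \<and> (\<forall>x\<in>V. \<forall>y\<in>V. E\<^sup>*\<^sup>* x y)"

definition gdist :: "('a \<Rightarrow> 'a \<Rightarrow> bool) \<Rightarrow> 'a \<Rightarrow> 'a \<Rightarrow> nat" where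
  "gdist E x y = (LEAST n. (E ^^ n) x y)"

definition setdist :: "('a \<Rightarrow> 'a \<Rightarrow> bool) \<Rightarrow> 'a \<Rightarrow> 'a set \<Rightarrow> nat" where
  "setdist E v C = Min ((\<lambda>x. gdist E v x) ` C)"

definition color_code :: "'a set \<Rightarrow> ('a \<Rightarrow> 'a \<Rightarrow> bool) \<Rightarrow> nat \<Rightarrow> ('a \<Rightarrow> nat) \<Rightarrow> 'a \<Rightarrow> nat list" where
  "color_code V E k c v = map (\<lambda>i. setdist E v {x \<in> V. c x = i}) [1..<k+1]"

definition locating_coloring :: "'a set \<Rightarrow> ('a \<Rightarrow> 'a \<Rightarrow> bool) \<Rightarrow> nat \<Rightarrow> ('a \<Rightarrow> nat) \<Rightarrow> bool" where
  "locating_coloring V E k c \<longleftrightarrow> c ` V = {1..k} \<and> (\<forall>x y. E x y \<longrightarrow> c x \<noteq> c y)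
     \<and> inj_on (color_code V E k c) V"

definition locating_chromatic_number :: "'a set \<Rightarrow> ('a \<Rightarrow> 'a \<Rightarrow> bool) \<Rightarrow> nat" where
  "locating_chromatic_number V E = (LEAST k. \<exists>c. locating_coloring V E k c)"

text \<open>Corona product G \<odot> H: vertex (u) is Inl u, vertex (u,v) is Inr (u,v).\<close>
definition corona_V :: "'a set \<Rightarrow> 'b set \<Rightarrow> ('a + 'a \<times> 'b) set" where
  "corona_V VG VH = Inl ` VG \<union> Inr ` (VG \<times> VH)"

fun corona_E :: "'a set \<Rightarrow> ('a \<Rightarrow> 'a \<Rightarrow> bool) \<Rightarrow> 'b set \<Rightarrow> ('b \<Rightarrow> 'b \<Rightarrow> bool)
    \<Rightarrow> ('a + 'a \<times> 'b) \<Rightarrow> ('a + 'a \<times> 'b) \<Rightarrow> bool" where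
  "corona_E VG EG VH EH (Inl a) (Inl b) = EG a b"
| "corona_E VG EG VH EH (Inr (a, x)) (Inr (b, y)) = (a = b \<and> a \<in> VG \<and> EH x y)"
| "corona_E VG EG VH EH (Inl a) (Inr (b, y)) = (a = b \<and> a \<in> VG \<and> y \<in> VH)"
| "corona_E VG EG VH EH (Inr (b, y)) (Inl a) = (a = b \<and> a \<in> VG \<and> y \<in> VH)"

text \<open>Join F + K_1: the new vertex is None.\<close>
definition join_K1_V :: "'b set \<Rightarrow> 'b option set" where
  "join_K1_V V = insert None (Some ` V)"

fun join_K1_E :: "'b set \<Rightarrow> ('b \<Rightarrow> 'b \<Rightarrow> bool) \<Rightarrow> 'b option \<Rightarrow> 'b option \<Rightarrow> bool" where
  "join_K1_E V E (Some x) (Some y) = E x y"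
| "join_K1_E V E None (Some y) = (y \<in> V)"
| "join_K1_E V E (Some x) None = (x \<in> V)"
| "join_K1_E V E None None = False"

definition components :: "'b set \<Rightarrow> ('b \<Rightarrow> 'b \<Rightarrow> bool) \<Rightarrow> 'b set set" where
  "components V E = {{y \<in> V. E\<^sup>*\<^sup>* x y} | x. x \<in> V}"

definition induced_E :: "'b set \<Rightarrow> ('b \<Rightarrow> 'b \<Rightarrow> bool) \<Rightarrow> 'b \<Rightarrow> 'b \<Rightarrow> bool" where
  "induced_E C E x y \<longleftrightarrow> E x y \<and> x \<in> C \<and> y \<in> C"

end

theory Submission imports Defs begin

text \<open>The copy \<open>H\<^sub>t(u)\<close> hangs from the single vertex \<open>(u)\<close>, adjacent to all of it: inside the copy
  distances are 0, 1 or 2 exactly as in \<open>H\<^sub>t + K\<^sub>1\<close>, and from a copy vertex every vertex outside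
  the copy is reached through \<open>(u)\<close>, hence at the same distance from all copy vertices. So two
  copy vertices are separated by \<open>c\<close> only through the colour classes met inside the copy.
  Relabelling the colours met by \<open>H\<^sub>t(u)\<close> as \<open>1, \<dots>, r\<close> and giving the apex of \<open>H\<^sub>t + K\<^sub>1\<close> the
  new colour \<open>r + 1\<close> therefore yields a locating colouring of \<open>H\<^sub>t + K\<^sub>1\<close>.\<close>

lemma gdist_le: "(R ^^ n) a b \<Longrightarrow> gdist R a b \<le> n"
  unfolding gdist_def by (rule Least_le)

lemma relpowp_gdist: "R\<^sup>*\<^sup>* a b \<Longrightarrow> (R ^^ gdist R a b) a b"
  unfolding gdist_def by (metis LeastI rtranclp_imp_relpowp)

lemma gdist_self: "gdist R a a = 0"
  using gdist_le[where R = R and n = 0] by simp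

lemma gdist_adjacent:
  assumes "a \<noteq> b" and "R a b"
  shows "gdist R a b = 1"
proof -
  have "gdist R a b \<le> 1" using gdist_le[of 1 R a b] assms(2) by (simp only: relpowp_1)
  moreover have "(R ^^ gdist R a b) a b" using assms(2) by (intro relpowp_gdist) blast
  ultimately show ?thesis using assms(1) by (cases "gdist R a b") auto
qed

lemma gdist_via_common_neighbour:
  assumes "R x z" and "R z w"
  shows "gdist R x w = (if x = w then 0 else if R x w then 1 else 2)"
proof -
  have "(R ^^ 2) x w" using assms by (auto simp: numeral_2_eq_2 relcompp_apply)
  then have walk: "(R ^^ gdist R x w) x w" and le2: "gdist R x w \<le> 2"
    by (auto intro: relpowp_gdist relpowp_imp_rtranclp gdist_le)
  have "gdist R x w \<noteq> 0" if "x \<noteq> w" using walk that by (metis relpowp_0_E)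
  moreover have "gdist R x w \<noteq> 1" if "\<not> R x w" using walk that by auto
  ultimately show ?thesis using le2 gdist_self gdist_adjacent by auto
qed

lemma relpowp_leaves_through_gate:
  assumes gate: "\<And>a b. a \<in> X \<Longrightarrow> R a b \<Longrightarrow> b \<in> X \<or> b = p"
  shows "(R ^^ n) a w \<Longrightarrow> a \<in> X \<Longrightarrow> w \<notin> X \<Longrightarrow> \<exists>k<n. (R ^^ k) p w"
proof (induction n arbitrary: a)
  case 0
  then show ?case by auto
next
  case (Suc n)
  then obtain b where "R a b" and walk: "(R ^^ n) b w" by (blast dest: relpowp_Suc_D2)
  from gate[OF \<open>a \<in> X\<close> \<open>R a b\<close>] show ?case
  proof
    assume "b \<in> X"
    then obtain k where "k < n" and "(R ^^ k) p w" using Suc.IH walk \<open>w \<notin> X\<close> by blast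
    then show ?case using less_SucI by blast
  next
    assume "b = p"
    then show ?case using walk by blast
  qed
qed

lemma gdist_through_gate:
  assumes gate: "\<And>a b. a \<in> X \<Longrightarrow> R a b \<Longrightarrow> b \<in> X \<or> b = p"
    and "a \<in> X" and "w \<notin> X" and "R a p" and "R\<^sup>*\<^sup>* p w"
  shows "gdist R a w = Suc (gdist R p w)"
proof (rule antisym)
  show "gdist R a w \<le> Suc (gdist R p w)"
    by (rule gdist_le, rule relpowp_Suc_I2[OF assms(4) relpowp_gdist[OF assms(5)]])
  have walk: "(R ^^ gdist R a w) a w"
    using assms(4,5) by (intro relpowp_gdist) (rule converse_rtranclp_into_rtranclp)
  have "\<exists>k<gdist R a w. (R ^^ k) p w"
    by (rule relpowp_leaves_through_gate[where X = X]) (use gate walk assms(2,3) in auto)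
  then obtain k where "k < gdist R a w" and "(R ^^ k) p w" by blast
  moreover from \<open>(R ^^ k) p w\<close> have "gdist R p w \<le> k" by (rule gdist_le)
  ultimately show "Suc (gdist R p w) \<le> gdist R a w" by simp
qed

lemma Min_image_eq_if_mutually_dominated:
  fixes f g :: "'x \<Rightarrow> nat"
  assumes "finite A" "finite B" "A \<noteq> {}" "B \<noteq> {}"
    and "\<And>a. a \<in> A \<Longrightarrow> \<exists>b\<in>B. g b \<le> f a" and "\<And>b. b \<in> B \<Longrightarrow> \<exists>a\<in>A. f a \<le> g b"
  shows "Min (f ` A) = Min (g ` B)"
proof (rule antisym)
  have "Min (g ` B) \<in> g ` B" using assms(2,4) by (intro Min_in) auto
  then obtain b where "b \<in> B" and b: "Min (g ` B) = g b" by blast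
  then obtain a where "a \<in> A" and "f a \<le> g b" using assms(6) by blast
  then show "Min (f ` A) \<le> Min (g ` B)" using assms(1,3) b by (auto simp: Min_le_iff)
  have "Min (f ` A) \<in> f ` A" using assms(1,3) by (intro Min_in) auto
  then obtain a where "a \<in> A" and a: "Min (f ` A) = f a" by blast
  then obtain b where "b \<in> B" and "g b \<le> f a" using assms(5) by blast
  then show "Min (g ` B) \<le> Min (f ` A)" using assms(2,4) a by (auto simp: Min_le_iff)
qed

lemma color_code_eq_iff:
  "color_code V E k c x = color_code V E k c y \<longleftrightarrow>
     (\<forall>i\<in>{1..k}. setdist E x {z \<in> V. c z = i} = setdist E y {z \<in> V. c z = i})"
  unfolding color_code_def map_eq_conv by auto

definition apex_coloring :: "('b \<Rightarrow> nat) \<Rightarrow> nat \<Rightarrow> 'b option \<Rightarrow> nat" where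
  "apex_coloring d r z = (case z of None \<Rightarrow> r + 1 | Some x \<Rightarrow> d x)"

text \<open>A copy \<open>\<iota> ` A\<close> of the graph \<open>(A, F)\<close> inside \<open>(V, E)\<close> whose only exit is the vertex \<open>p\<close>,
  which is adjacent to the whole copy; in \<open>G \<odot> H\<close> this is \<open>H\<^sub>t(u)\<close> hanging from \<open>(u)\<close>.\<close>
locale attached_copy =
  fixes V :: "'v set" and E :: "'v \<Rightarrow> 'v \<Rightarrow> bool"
    and A :: "'b set" and F :: "'b \<Rightarrow> 'b \<Rightarrow> bool"
    and \<iota> :: "'b \<Rightarrow> 'v" and p :: 'v
  assumes finite_V: "finite V"
    and inj_\<iota>: "inj_on \<iota> A" and copy_subset: "\<iota> ` A \<subseteq> V"
    and apex_adj: "\<And>x. x \<in> A \<Longrightarrow> E (\<iota> x) p \<and> E p (\<iota> x)"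
    and copy_adj: "\<And>x y. x \<in> A \<Longrightarrow> y \<in> A \<Longrightarrow> E (\<iota> x) (\<iota> y) \<longleftrightarrow> F x y"
    and F_within: "\<And>x y. F x y \<Longrightarrow> x \<in> A \<and> y \<in> A"
    and gate: "\<And>a b. a \<in> \<iota> ` A \<Longrightarrow> E a b \<Longrightarrow> b \<in> \<iota> ` A \<or> b = p"
    and reach: "\<And>w. w \<in> V \<Longrightarrow> E\<^sup>*\<^sup>* p w"
begin

lemma finite_A: "finite A"
proof -
  have "finite (\<iota> ` A)" using copy_subset finite_V by (rule finite_subset)
  then show ?thesis by (simp add: finite_image_iff[OF inj_\<iota>])
qed

lemma gdist_copy:
  assumes "x \<in> A" and "w \<in> A"
  shows "gdist E (\<iota> x) (\<iota> w) = gdist (join_K1_E A F) (Some x) (Some w)"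
proof -
  have "gdist E (\<iota> x) (\<iota> w) = (if x = w then 0 else if F x w then 1 else 2)"
    using gdist_via_common_neighbour[of E "\<iota> x" p "\<iota> w"] assms apex_adj copy_adj inj_\<iota>
    by (auto dest: inj_onD)
  moreover have "gdist (join_K1_E A F) (Some x) (Some w) = (if x = w then 0 else if F x w then 1 else 2)"
    using gdist_via_common_neighbour[of "join_K1_E A F" "Some x" None "Some w"] assms by auto
  ultimately show ?thesis by simp
qed

lemma gdist_leave_copy:
  assumes "x \<in> A" and "w \<in> V" and "w \<notin> \<iota> ` A"
  shows "gdist E (\<iota> x) w = Suc (gdist E p w)"
  by (rule gdist_through_gate[where X = "\<iota> ` A"]) (use gate assms apex_adj reach in auto)

text \<open>The part of a colour class outside the copy is at the same distance from every copy vertex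
  (\<open>gdist_leave_copy\<close>), so only the part inside the copy can separate \<open>\<iota> a\<close> from \<open>\<iota> b\<close>.\<close>
lemma color_code_eq_if_copy_setdist_eq:
  assumes colours: "c ` V = {1..m}" and "a \<in> A" and "b \<in> A"
    and same: "\<And>i. setdist E (\<iota> a) {z \<in> \<iota> ` A. c z = i} = setdist E (\<iota> b) {z \<in> \<iota> ` A. c z = i}"
  shows "color_code V E m c (\<iota> a) = color_code V E m c (\<iota> b)"
proof -
  let ?C = "\<lambda>i. {z \<in> V. c z = i}" and ?D = "\<lambda>i. {z \<in> \<iota> ` A. c z = i}"
  have dominated: "\<exists>w'\<in>?C i. gdist E (\<iota> y) w' \<le> gdist E (\<iota> x) w"
    if "x \<in> A" "y \<in> A" "setdist E (\<iota> x) (?D i) = setdist E (\<iota> y) (?D i)" "w \<in> ?C i" for x y i w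
  proof (cases "w \<in> \<iota> ` A")
    case False
    then show ?thesis using that gdist_leave_copy by auto
  next
    case True
    then have "w \<in> ?D i" using that by auto
    have fin: "finite (?D i)" using finite_A by simp
    have "setdist E (\<iota> y) (?D i) \<in> gdist E (\<iota> y) ` ?D i"
      unfolding setdist_def using fin \<open>w \<in> ?D i\<close> by (intro Min_in) auto
    then obtain w' where w': "w' \<in> ?D i" and "gdist E (\<iota> y) w' = setdist E (\<iota> y) (?D i)"
      by (metis (no_types, lifting) imageE)
    moreover have "setdist E (\<iota> x) (?D i) \<le> gdist E (\<iota> x) w"
      using fin \<open>w \<in> ?D i\<close> unfolding setdist_def by auto
    ultimately have "gdist E (\<iota> y) w' \<le> gdist E (\<iota> x) w" using that(3) by simp
    moreover have "w' \<in> ?C i" using w' copy_subset by auto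
    ultimately show ?thesis by blast
  qed
  show ?thesis unfolding color_code_eq_iff setdist_def
  proof
    fix i assume "i \<in> {1..m}"
    then have "?C i \<noteq> {}" using colours by (metis (mono_tags, lifting) empty_iff image_iff mem_Collect_eq)
    moreover have "finite (?C i)" using finite_V by simp
    ultimately show "Min (gdist E (\<iota> a) ` ?C i) = Min (gdist E (\<iota> b) ` ?C i)"
      using dominated[OF assms(2,3) same] dominated[OF assms(3,2) same[symmetric]]
      by (intro Min_image_eq_if_mutually_dominated) blast+
  qed
qed

context
  fixes c :: "'v \<Rightarrow> nat" and h :: "nat \<Rightarrow> nat" and r :: nat
  assumes h: "bij_betw h (c ` \<iota> ` A) {1..r}"
begin

abbreviation "c' \<equiv> apex_coloring (h \<circ> c \<circ> \<iota>) r"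

lemma apex_coloring_copy_range:
  assumes "x \<in> A"
  shows "c' (Some x) \<in> {1..r}"
  using bij_betw_apply[OF h imageI[OF imageI[OF assms]]] by (simp add: apex_coloring_def)

lemma apex_coloring_apex_class: "{z \<in> join_K1_V A. c' z = r + 1} = {None}"
proof -
  have "c' (Some x) \<noteq> r + 1" if "x \<in> A" for x
    using apex_coloring_copy_range[OF that] by simp
  then show ?thesis by (auto simp: join_K1_V_def apex_coloring_def)
qed

lemma apex_coloring_copy_class:
  assumes "i \<in> c ` \<iota> ` A"
  shows "{z \<in> join_K1_V A. c' z = h i} = Some ` {x \<in> A. c (\<iota> x) = i}"
proof -
  have "h i \<noteq> r + 1" using bij_betw_apply[OF h assms] by simp
  moreover have "h (c (\<iota> x)) = h i \<longleftrightarrow> c (\<iota> x) = i" if "x \<in> A" for x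
    using bij_betw_imp_inj_on[OF h] assms that by (auto dest: inj_onD)
  ultimately show ?thesis by (auto simp: join_K1_V_def apex_coloring_def)
qed

lemma setdist_apex_coloring_copy_class:
  assumes "a \<in> A" and "i \<in> c ` \<iota> ` A"
  shows "setdist (join_K1_E A F) (Some a) {z \<in> join_K1_V A. c' z = h i}
       = setdist E (\<iota> a) {z \<in> \<iota> ` A. c z = i}"
proof -
  let ?D = "{x \<in> A. c (\<iota> x) = i}"
  have "{z \<in> \<iota> ` A. c z = i} = \<iota> ` ?D" by auto
  moreover have "setdist (join_K1_E A F) (Some a) (Some ` ?D) = setdist E (\<iota> a) (\<iota> ` ?D)"
    unfolding setdist_def image_image
    by (intro arg_cong[where f = Min] image_cong) (auto simp: gdist_copy assms(1))
  ultimately show ?thesis by (simp only: apex_coloring_copy_class[OF assms(2)])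
qed

lemma locating_apex_coloring:
  assumes loc: "locating_coloring V E m c"
  shows "locating_coloring (join_K1_V A) (join_K1_E A F) (r + 1) c'"
  unfolding locating_coloring_def
proof (intro conjI allI impI)
  have "c' ` Some ` A = h ` c ` \<iota> ` A" by (simp add: image_image apex_coloring_def)
  also have "\<dots> = {1..r}" using h by (simp add: bij_betw_def)
  finally show "c' ` join_K1_V A = {1..r + 1}"
    by (simp add: join_K1_V_def apex_coloring_def atLeastAtMostSuc_conv)
next
  fix x y assume edge: "join_K1_E A F x y"
  show "c' x \<noteq> c' y"
  proof (cases x; cases y)
    fix a b assume xy: "x = Some a" "y = Some b"
    with edge have "a \<in> A" "b \<in> A" "F a b" using F_within by auto
    then have "c (\<iota> a) \<noteq> c (\<iota> b)" using loc copy_adj by (auto simp: locating_coloring_def)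
    then show ?thesis
      using xy h \<open>a \<in> A\<close> \<open>b \<in> A\<close> by (auto simp: apex_coloring_def bij_betw_def dest: inj_onD)
  qed (use edge apex_coloring_copy_range in \<open>fastforce simp: apex_coloring_def\<close>)+
next
  let ?JV = "join_K1_V A" and ?JE = "join_K1_E A F"
  have inj: "inj_on (color_code V E m c) V" and colours: "c ` V = {1..m}"
    using loc by (auto simp: locating_coloring_def)
  have apex_dist: "setdist ?JE z {z \<in> ?JV. c' z = r + 1} = (if z = None then 0 else 1)"
    if "z \<in> ?JV" for z
    using that unfolding apex_coloring_apex_class setdist_def
    by (auto simp: join_K1_V_def gdist_self gdist_adjacent)
  show "inj_on (color_code ?JV ?JE (r + 1) c') ?JV"
  proof (rule inj_onI)
    fix x y assume "x \<in> ?JV" "y \<in> ?JV"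
      and "color_code ?JV ?JE (r + 1) c' x = color_code ?JV ?JE (r + 1) c' y"
    then have same: "\<And>j. j \<in> {1..r + 1} \<Longrightarrow>
        setdist ?JE x {z \<in> ?JV. c' z = j} = setdist ?JE y {z \<in> ?JV. c' z = j}"
      by (simp add: color_code_eq_iff)
    show "x = y"
    proof (cases x; cases y)
      fix a b assume xy: "x = Some a" "y = Some b"
      then have "a \<in> A" "b \<in> A" using \<open>x \<in> ?JV\<close> \<open>y \<in> ?JV\<close> by (auto simp: join_K1_V_def)
      have "setdist E (\<iota> a) {z \<in> \<iota> ` A. c z = i} = setdist E (\<iota> b) {z \<in> \<iota> ` A. c z = i}" for i
      proof (cases "i \<in> c ` \<iota> ` A")
        case True
        have "h i \<in> {1..r + 1}" using bij_betw_apply[OF h True] by simp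
        then have "setdist ?JE x {z \<in> ?JV. c' z = h i} = setdist ?JE y {z \<in> ?JV. c' z = h i}"
          by (rule same)
        then show ?thesis
          using setdist_apex_coloring_copy_class[OF \<open>a \<in> A\<close> True]
            setdist_apex_coloring_copy_class[OF \<open>b \<in> A\<close> True] xy by simp
      next
        case False
        then have empty: "{z \<in> \<iota> ` A. c z = i} = {}" by auto
        show ?thesis unfolding empty by (simp add: setdist_def)
      qed
      then have "color_code V E m c (\<iota> a) = color_code V E m c (\<iota> b)"
        by (rule color_code_eq_if_copy_setdist_eq[OF colours \<open>a \<in> A\<close> \<open>b \<in> A\<close>])
      then have "\<iota> a = \<iota> b"
        using copy_subset \<open>a \<in> A\<close> \<open>b \<in> A\<close> by (auto intro: inj_onD[OF inj])
      then show ?thesis using inj_onD[OF inj_\<iota>] xy \<open>a \<in> A\<close> \<open>b \<in> A\<close> by simp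
    qed (use same[of "r + 1"] apex_dist \<open>x \<in> ?JV\<close> \<open>y \<in> ?JV\<close> in auto)
  qed
qed

end

lemma locating_chromatic_number_join_K1_le:
  assumes "locating_coloring V E m c"
  shows "locating_chromatic_number (join_K1_V A) (join_K1_E A F) \<le> card (c ` \<iota> ` A) + 1"
proof -
  let ?S = "c ` \<iota> ` A"
  have "finite ?S" using finite_A by simp
  then obtain h where "bij_betw h ?S {1..card ?S}"
    using finite_same_card_bij[of ?S "{1..card ?S}"] by auto
  then have "locating_coloring (join_K1_V A) (join_K1_E A F) (card ?S + 1)
      (apex_coloring (h \<circ> c \<circ> \<iota>) (card ?S))"
    using assms by (rule locating_apex_coloring)
  then show ?thesis unfolding locating_chromatic_number_def by (auto intro: Least_le)
qed

end

lemma corona_reachable_from_Inl: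
  assumes "connected_graph VG EG" and "u \<in> VG" and "w \<in> corona_V VG VH"
  shows "(corona_E VG EG VH EH)\<^sup>*\<^sup>* (Inl u) w"
proof -
  let ?E = "corona_E VG EG VH EH"
  have lift: "?E\<^sup>*\<^sup>* (Inl u) (Inl a)" if "a \<in> VG" for a
  proof -
    have "EG\<^sup>*\<^sup>* u a" using assms(1,2) that by (auto simp: connected_graph_def)
    then show ?thesis
      by (induction rule: rtranclp_induct) (auto intro: rtranclp.rtrancl_into_rtrancl)
  qed
  show ?thesis
  proof (cases w)
    case (Inl a)
    then show ?thesis using assms(3) lift by (auto simp: corona_V_def)
  next
    case (Inr q)
    then obtain a y where "w = Inr (a, y)" "a \<in> VG" "y \<in> VH"
      using assms(3) by (auto simp: corona_V_def)
    then have "?E (Inl a) w" by simp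
    with lift[OF \<open>a \<in> VG\<close>] show ?thesis by (rule rtranclp.rtrancl_into_rtrancl)
  qed
qed

lemma component_closed:
  assumes "graph V E" and "C \<in> components V E" and "x \<in> C" and "E x y"
  shows "y \<in> C"
  using assms by (auto simp: components_def graph_def intro: rtranclp.rtrancl_into_rtrancl)

lemma component_subset: "C \<in> components V E \<Longrightarrow> C \<subseteq> V"
  by (auto simp: components_def)

lemma attached_copy_corona_fiber:
  assumes "connected_graph VG EG" and "graph VH EH" and "u \<in> VG" and "Ht \<in> components VH EH"
  shows "attached_copy (corona_V VG VH) (corona_E VG EG VH EH) Ht (induced_E Ht EH)
           (\<lambda>x. Inr (u, x)) (Inl u)"
proof -
  have "Ht \<subseteq> VH" using assms(4) by (rule component_subset)
  moreover have "finite VG" "finite VH"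
    using assms(1,2) by (auto simp: connected_graph_def graph_def)
  moreover have "b \<in> (\<lambda>x. Inr (u, x)) ` Ht \<or> b = Inl u"
    if "a \<in> (\<lambda>x. Inr (u, x)) ` Ht" and "corona_E VG EG VH EH a b" for a b
    using that component_closed[OF assms(2,4)] by (cases b) auto
  ultimately show ?thesis
  proof unfold_locales
    show "\<And>w. w \<in> corona_V VG VH \<Longrightarrow> (corona_E VG EG VH EH)\<^sup>*\<^sup>* (Inl u) w"
      using assms(1,3) by (rule corona_reachable_from_Inl)
  qed (use assms in \<open>auto simp: corona_V_def induced_E_def inj_on_def\<close>)
qed

theorem lemma2:
  fixes VG :: "'a set" and EG :: "'a \<Rightarrow> 'a \<Rightarrow> bool"
    and VH :: "'b set" and EH :: "'b \<Rightarrow> 'b \<Rightarrow> bool"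
    and c :: "('a + 'a \<times> 'b) \<Rightarrow> nat" and m :: nat
  assumes "connected_graph VG EG" and "card VG \<ge> 2"
    and "graph VH EH" and "VH \<noteq> {}"
    and "locating_coloring (corona_V VG VH) (corona_E VG EG VH EH) m c"
    and "u \<in> VG" and "Ht \<in> components VH EH"
  shows "card (c ` (Inr ` ({u} \<times> Ht)))
           \<ge> locating_chromatic_number (join_K1_V Ht) (join_K1_E Ht (induced_E Ht EH)) - 1"
proof -
  interpret attached_copy "corona_V VG VH" "corona_E VG EG VH EH" Ht "induced_E Ht EH"
    "\<lambda>x. Inr (u, x)" "Inl u"
    using assms(1,3,6,7) by (rule attached_copy_corona_fiber)
  have fiber: "Inr ` ({u} \<times> Ht) = (\<lambda>x. Inr (u, x)) ` Ht" by auto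
  show ?thesis
    unfolding fiber using locating_chromatic_number_join_K1_le[OF assms(5)] by linarith
qed

end
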